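(* Let $(H,p)$ be a pivotal Hopf monoid in a symmetric monoidal category $\mathcal C$, $\Gamma$ a directed ribbon graph with edge set $E$ and $\alpha\in E$. Then: 1. $(H^{\otimes E},\rhd_{\alpha+},\delta_{\alpha+})$ and $(H^{\otimes E},\rhd_{\alpha-},\delta_{\alpha-})$ are left-left $H$-Hopf modules, i.e. $\delta\circ\rhd=(m\otimes\rhd)\circ(1_H\otimes\tau_{H,H}\otimes1_{H^{\otimes E}})\circ(\Delta\otimes\delta)$ for $(\rhd,\delta)=(\rhd_{\alpha\pm},\delta_{\alpha\pm})$; 2. $\rhd_{\alpha-}\circ(1_H\otimes\rhd_{\alpha+})=\rhd_{\alpha+}\circ(1_H\otimes\rhd_{\alpha-})\circ(\tau_{H,H}\otimes1_{H^{\otimes E}})$ and $(1_H\otimes\delta_{\alpha-})\circ\delta_{\alpha+}=(\tau_{H,H}\otimes1_{H^{\otimes E}})\circ(1_H\otimes\delta_{\alpha+})\circ\delta_{\alpha-}$.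
   Context: $\mathcal C$ symmetric monoidal (unit $e$, symmetry $\tau$); $H$ a Hopf monoid ($m,\eta,\Delta,\epsilon,S$); pivotal: $p:e\to H$ with $\Delta\circ p=p\otimes p$, $\epsilon\circ p=1_e$, $m\circ(m\otimes1)\circ(1\otimes S^2\otimes S)\circ(p\otimes1\otimes p)=1_H$; $T:=m\circ(p\otimes S)$. Sweedler notation is shorthand for composites in $\mathcal C$. A directed ribbon graph is a finite directed graph with edge set $E$ (plus cyclic orderings at vertices). $H^{\otimes E}$ is the tensor product of copies of $H$ indexed by $E$ (the copy of $\alpha$ being its label). For $\alpha\in E$ with label $a$ (other labels unchanged): $\rhd_{\alpha+}:H\otimes H^{\otimes E}\to H^{\otimes E}$, $h\otimes(\dots a\dots)\mapsto(\dots ha\dots)$; $\rhd_{\alpha-}$: $a\mapsto T(hT(a))$; $\delta_{\alpha+}:H^{\otimes E}\to H\otimes H^{\otimes E}$, $(\dots a\dots)\mapsto a_{(1)}\otimes(\dots a_{(2)}\dots)$; $\delta_{\alpha-}$: $(\dots a\dots)\mapsto T(a)_{(1)}\otimes(\dots T(T(a)_{(2)})\dots)$. *)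

theory Defs
  imports Main
begin

text \<open>A strict symmetric monoidal category, presented by its data:
objects (predicate c_ob), morphisms (predicate c_ar), domain/codomain,
identities, composition (c_cmp g f = g after f), tensor on objects and
morphisms, unit object and symmetry.\<close>

record ('o, 'm) smcat =
  c_ob  :: "'o \<Rightarrow> bool"
  c_ar  :: "'m \<Rightarrow> bool"
  c_dom :: "'m \<Rightarrow> 'o"
  c_cod :: "'m \<Rightarrow> 'o"
  c_id  :: "'o \<Rightarrow> 'm"
  c_cmp :: "'m \<Rightarrow> 'm \<Rightarrow> 'm"
  c_tob :: "'o \<Rightarrow> 'o \<Rightarrow> 'o"
  c_tar :: "'m \<Rightarrow> 'm \<Rightarrow> 'm"
  c_unit :: "'o"
  c_sym :: "'o \<Rightarrow> 'o \<Rightarrow> 'm"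

definition c_hom :: "('o, 'm) smcat \<Rightarrow> 'm \<Rightarrow> 'o \<Rightarrow> 'o \<Rightarrow> bool" where
  "c_hom C f a b \<longleftrightarrow> c_ar C f \<and> c_ob C a \<and> c_ob C b \<and> c_dom C f = a \<and> c_cod C f = b"

definition strict_smc :: "('o, 'm) smcat \<Rightarrow> bool" where
  "strict_smc C \<longleftrightarrow>
    \<comment> \<open>category\<close>
    (\<forall>f. c_ar C f \<longrightarrow> c_ob C (c_dom C f) \<and> c_ob C (c_cod C f)) \<and>
    (\<forall>a. c_ob C a \<longrightarrow> c_hom C (c_id C a) a a) \<and>
    (\<forall>f g. c_ar C f \<and> c_ar C g \<and> c_cod C f = c_dom C g \<longrightarrow>
        c_hom C (c_cmp C g f) (c_dom C f) (c_cod C g)) \<and>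
    (\<forall>f. c_ar C f \<longrightarrow> c_cmp C f (c_id C (c_dom C f)) = f \<and> c_cmp C (c_id C (c_cod C f)) f = f) \<and>
    (\<forall>f g h. c_ar C f \<and> c_ar C g \<and> c_ar C h \<and> c_cod C f = c_dom C g \<and> c_cod C g = c_dom C h \<longrightarrow>
        c_cmp C h (c_cmp C g f) = c_cmp C (c_cmp C h g) f) \<and>
    \<comment> \<open>tensor bifunctor\<close>
    c_ob C (c_unit C) \<and>
    (\<forall>a b. c_ob C a \<and> c_ob C b \<longrightarrow> c_ob C (c_tob C a b)) \<and>
    (\<forall>f g. c_ar C f \<and> c_ar C g \<longrightarrow>
        c_hom C (c_tar C f g) (c_tob C (c_dom C f) (c_dom C g)) (c_tob C (c_cod C f) (c_cod C g))) \<and>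
    (\<forall>a b. c_ob C a \<and> c_ob C b \<longrightarrow> c_tar C (c_id C a) (c_id C b) = c_id C (c_tob C a b)) \<and>
    (\<forall>f g f' g'. c_ar C f \<and> c_ar C g \<and> c_ar C f' \<and> c_ar C g' \<and>
        c_cod C f = c_dom C g \<and> c_cod C f' = c_dom C g' \<longrightarrow>
        c_tar C (c_cmp C g f) (c_cmp C g' f') = c_cmp C (c_tar C g g') (c_tar C f f')) \<and>
    \<comment> \<open>strictness: associator and unitors are identities\<close>
    (\<forall>a b c. c_ob C a \<and> c_ob C b \<and> c_ob C c \<longrightarrow>
        c_tob C (c_tob C a b) c = c_tob C a (c_tob C b c)) \<and>
    (\<forall>a. c_ob C a \<longrightarrow> c_tob C (c_unit C) a = a \<and> c_tob C a (c_unit C) = a) \<and>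
    (\<forall>f g h. c_ar C f \<and> c_ar C g \<and> c_ar C h \<longrightarrow>
        c_tar C (c_tar C f g) h = c_tar C f (c_tar C g h)) \<and>
    (\<forall>f. c_ar C f \<longrightarrow> c_tar C (c_id C (c_unit C)) f = f \<and> c_tar C f (c_id C (c_unit C)) = f) \<and>
    \<comment> \<open>symmetry: natural, involutive, hexagon\<close>
    (\<forall>a b. c_ob C a \<and> c_ob C b \<longrightarrow> c_hom C (c_sym C a b) (c_tob C a b) (c_tob C b a)) \<and>
    (\<forall>f g. c_ar C f \<and> c_ar C g \<longrightarrow>
        c_cmp C (c_sym C (c_cod C f) (c_cod C g)) (c_tar C f g) =
        c_cmp C (c_tar C g f) (c_sym C (c_dom C f) (c_dom C g))) \<and>
    (\<forall>a b. c_ob C a \<and> c_ob C b \<longrightarrow> c_cmp C (c_sym C b a) (c_sym C a b) = c_id C (c_tob C a b)) \<and>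
    (\<forall>a b c. c_ob C a \<and> c_ob C b \<and> c_ob C c \<longrightarrow>
        c_sym C a (c_tob C b c) =
        c_cmp C (c_tar C (c_id C b) (c_sym C a c)) (c_tar C (c_sym C a b) (c_id C c)))"

definition hopf_monoid :: "('o, 'm) smcat \<Rightarrow> 'o \<Rightarrow> 'm \<Rightarrow> 'm \<Rightarrow> 'm \<Rightarrow> 'm \<Rightarrow> 'm \<Rightarrow> bool" where
  "hopf_monoid C H m u D e S \<longleftrightarrow>
    c_ob C H \<and>
    c_hom C m (c_tob C H H) H \<and> c_hom C u (c_unit C) H \<and>
    c_hom C D H (c_tob C H H) \<and> c_hom C e H (c_unit C) \<and> c_hom C S H H \<and>
    \<comment> \<open>monoid\<close>
    c_cmp C m (c_tar C m (c_id C H)) = c_cmp C m (c_tar C (c_id C H) m) \<and>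
    c_cmp C m (c_tar C u (c_id C H)) = c_id C H \<and>
    c_cmp C m (c_tar C (c_id C H) u) = c_id C H \<and>
    \<comment> \<open>comonoid\<close>
    c_cmp C (c_tar C D (c_id C H)) D = c_cmp C (c_tar C (c_id C H) D) D \<and>
    c_cmp C (c_tar C e (c_id C H)) D = c_id C H \<and>
    c_cmp C (c_tar C (c_id C H) e) D = c_id C H \<and>
    \<comment> \<open>bimonoid\<close>
    c_cmp C D m = c_cmp C (c_tar C m m)
       (c_cmp C (c_tar C (c_id C H) (c_tar C (c_sym C H H) (c_id C H))) (c_tar C D D)) \<and>
    c_cmp C e m = c_tar C e e \<and>
    c_cmp C D u = c_tar C u u \<and>
    c_cmp C e u = c_id C (c_unit C) \<and>
    \<comment> \<open>antipode\<close>
    c_cmp C m (c_cmp C (c_tar C S (c_id C H)) D) = c_cmp C u e \<and>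
    c_cmp C m (c_cmp C (c_tar C (c_id C H) S) D) = c_cmp C u e"

definition pivotal_hopf :: "('o, 'm) smcat \<Rightarrow> 'o \<Rightarrow> 'm \<Rightarrow> 'm \<Rightarrow> 'm \<Rightarrow> 'm \<Rightarrow> 'm \<Rightarrow> 'm \<Rightarrow> bool" where
  "pivotal_hopf C H m u D e S p \<longleftrightarrow>
    hopf_monoid C H m u D e S \<and>
    c_hom C p (c_unit C) H \<and>
    c_cmp C D p = c_tar C p p \<and>
    c_cmp C e p = c_id C (c_unit C) \<and>
    c_cmp C m (c_cmp C (c_tar C m (c_id C H))
       (c_cmp C (c_tar C (c_id C H) (c_tar C (c_cmp C S S) S))
                (c_tar C p (c_tar C (c_id C H) p)))) = c_id C H"

definition pivT :: "('o, 'm) smcat \<Rightarrow> 'm \<Rightarrow> 'm \<Rightarrow> 'm \<Rightarrow> 'm" where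
  "pivT C m S p = c_cmp C m (c_tar C p S)"

primrec tpow :: "('o, 'm) smcat \<Rightarrow> 'o \<Rightarrow> nat \<Rightarrow> 'o" where
  "tpow C H 0 = c_unit C"
| "tpow C H (Suc n) = c_tob C H (tpow C H n)"

text \<open>The edge set E is given as a duplicate-free list es (fixing the order of
the tensor factors of H^{(x) E}); edge a sits in position epos es a.\<close>
definition epos :: "'e list \<Rightarrow> 'e \<Rightarrow> nat" where
  "epos es a = length (takeWhile (\<lambda>x. x \<noteq> a) es)"

definition tpowE :: "('o, 'm) smcat \<Rightarrow> 'o \<Rightarrow> 'e list \<Rightarrow> 'o" where
  "tpowE C H es = tpow C H (length es)"

definition befE :: "('o, 'm) smcat \<Rightarrow> 'o \<Rightarrow> 'e list \<Rightarrow> 'e \<Rightarrow> 'o" where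
  "befE C H es a = tpow C H (epos es a)"

definition aftE :: "('o, 'm) smcat \<Rightarrow> 'o \<Rightarrow> 'e list \<Rightarrow> 'e \<Rightarrow> 'o" where
  "aftE C H es a = tpow C H (length es - epos es a - 1)"

text \<open>Act on the copy of edge a with f : H (x) H -> H:
 h (x) (... x ...) |-> (... f(h (x) x) ...).\<close>
definition edge_act :: "('o, 'm) smcat \<Rightarrow> 'o \<Rightarrow> 'e list \<Rightarrow> 'e \<Rightarrow> 'm \<Rightarrow> 'm" where
  "edge_act C H es a f =
    (let X = befE C H es a; Y = aftE C H es a in
     c_cmp C (c_tar C (c_id C X) (c_tar C f (c_id C Y)))
             (c_tar C (c_sym C H X) (c_id C (c_tob C H Y))))"

text \<open>Coact from the copy of edge a with g : H -> H (x) H: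
 (... x ...) |-> g(x)_1 (x) (... g(x)_2 ...).\<close>
definition edge_coact :: "('o, 'm) smcat \<Rightarrow> 'o \<Rightarrow> 'e list \<Rightarrow> 'e \<Rightarrow> 'm \<Rightarrow> 'm" where
  "edge_coact C H es a g =
    (let X = befE C H es a; Y = aftE C H es a in
     c_cmp C (c_tar C (c_sym C X H) (c_id C (c_tob C H Y)))
             (c_tar C (c_id C X) (c_tar C g (c_id C Y))))"

definition act_plus :: "('o, 'm) smcat \<Rightarrow> 'o \<Rightarrow> 'm \<Rightarrow> 'e list \<Rightarrow> 'e \<Rightarrow> 'm" where
  "act_plus C H m es a = edge_act C H es a m"

definition act_minus :: "('o, 'm) smcat \<Rightarrow> 'o \<Rightarrow> 'm \<Rightarrow> 'm \<Rightarrow> 'm \<Rightarrow> 'e list \<Rightarrow> 'e \<Rightarrow> 'm" where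
  "act_minus C H m S p es a =
     edge_act C H es a (c_cmp C (pivT C m S p) (c_cmp C m (c_tar C (c_id C H) (pivT C m S p))))"

definition coact_plus :: "('o, 'm) smcat \<Rightarrow> 'o \<Rightarrow> 'm \<Rightarrow> 'e list \<Rightarrow> 'e \<Rightarrow> 'm" where
  "coact_plus C H D es a = edge_coact C H es a D"

definition coact_minus :: "('o, 'm) smcat \<Rightarrow> 'o \<Rightarrow> 'm \<Rightarrow> 'm \<Rightarrow> 'm \<Rightarrow> 'm \<Rightarrow> 'e list \<Rightarrow> 'e \<Rightarrow> 'm" where
  "coact_minus C H m D S p es a =
     edge_coact C H es a (c_cmp C (c_tar C (c_id C H) (pivT C m S p)) (c_cmp C D (pivT C m S p)))"

definition ll_hopf_module :: "('o, 'm) smcat \<Rightarrow> 'o \<Rightarrow> 'm \<Rightarrow> 'm \<Rightarrow> 'o \<Rightarrow> 'm \<Rightarrow> 'm \<Rightarrow> bool" where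
  "ll_hopf_module C H m D M act coact \<longleftrightarrow>
     c_cmp C coact act =
     c_cmp C (c_tar C m act)
       (c_cmp C (c_tar C (c_id C H) (c_tar C (c_sym C H H) (c_id C M)))
                (c_tar C D coact))"

end

theory Submission
  imports Defs
begin

text \<open>
  The structures at an edge \<open>\<alpha>\<close> only touch the \<open>\<alpha>\<close>-th tensor factor. Moving that factor to
  the front with symmetries, each of them is the image of a structure on \<open>H\<close> itself under a
  construction (\<open>on_factor\<close>) that is functorial and commutes with tensoring on the left, so
  all four identities reduce to identities in \<open>H\<close>.

  On \<open>H\<close>, the \<open>+\<close> structures are \<open>m\<close> and \<open>\<Delta>\<close>, and the Hopf module identity is the bimonoid
  axiom. The \<open>-\<close> structures are their conjugates by \<open>T = m \<circ> (p \<otimes> S)\<close>, which the pivotal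
  axiom makes an involution; so their Hopf module identity is again the bimonoid axiom. Since
  \<open>S\<close> reverses products and coproducts, the conjugates are \<open>h \<otimes> a \<mapsto> a S(h)\<close> and
  \<open>a \<mapsto> T(a\<^sub>2) \<otimes> a\<^sub>1\<close>, and the \<open>+\<close> and \<open>-\<close> structures commute by (co)associativity.
\<close>

section \<open>Strict symmetric monoidal categories\<close>

locale smc =
  fixes C :: "('o, 'm) smcat"
  assumes smc: "strict_smc C"
begin

abbreviation ob where "ob \<equiv> c_ob C"
abbreviation ar where "ar \<equiv> c_ar C"
abbreviation dom where "dom \<equiv> c_dom C"
abbreviation cod where "cod \<equiv> c_cod C"
abbreviation idm where "idm \<equiv> c_id C"
abbreviation cmp (infixr "\<odot>" 55) where "cmp \<equiv> c_cmp C"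
abbreviation tar (infixr "\<otimes>" 60) where "tar \<equiv> c_tar C"
abbreviation tob (infixr "\<boxtimes>" 65) where "tob \<equiv> c_tob C"
abbreviation one where "one \<equiv> c_unit C"
abbreviation sym where "sym \<equiv> c_sym C"

lemmas strict_smc_unfolded = smc[unfolded strict_smc_def c_hom_def]

lemma ob_dom[simp]: "ar f \<Longrightarrow> ob (dom f)" and ob_cod[simp]: "ar f \<Longrightarrow> ob (cod f)"
  using strict_smc_unfolded by simp_all

lemma ar_idm[simp]: "ob a \<Longrightarrow> ar (idm a)" and dom_idm[simp]: "ob a \<Longrightarrow> dom (idm a) = a"
  and cod_idm[simp]: "ob a \<Longrightarrow> cod (idm a) = a"
  using strict_smc_unfolded by simp_all

lemma ar_cmp[simp]: "ar f \<Longrightarrow> ar g \<Longrightarrow> cod f = dom g \<Longrightarrow> ar (g \<odot> f)"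
  and dom_cmp[simp]: "ar f \<Longrightarrow> ar g \<Longrightarrow> cod f = dom g \<Longrightarrow> dom (g \<odot> f) = dom f"
  and cod_cmp[simp]: "ar f \<Longrightarrow> ar g \<Longrightarrow> cod f = dom g \<Longrightarrow> cod (g \<odot> f) = cod g"
  using strict_smc_unfolded by simp_all

lemma ob_one[simp]: "ob one" and ob_tob[simp]: "ob a \<Longrightarrow> ob b \<Longrightarrow> ob (a \<boxtimes> b)"
  using strict_smc_unfolded by simp_all

lemma ar_tar[simp]: "ar f \<Longrightarrow> ar g \<Longrightarrow> ar (f \<otimes> g)"
  and dom_tar[simp]: "ar f \<Longrightarrow> ar g \<Longrightarrow> dom (f \<otimes> g) = dom f \<boxtimes> dom g"
  and cod_tar[simp]: "ar f \<Longrightarrow> ar g \<Longrightarrow> cod (f \<otimes> g) = cod f \<boxtimes> cod g"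
  using strict_smc_unfolded by simp_all

lemma tob_assoc[simp]: "ob a \<Longrightarrow> ob b \<Longrightarrow> ob c \<Longrightarrow> (a \<boxtimes> b) \<boxtimes> c = a \<boxtimes> (b \<boxtimes> c)"
  and tob_one_left[simp]: "ob a \<Longrightarrow> one \<boxtimes> a = a"
  and tob_one_right[simp]: "ob a \<Longrightarrow> a \<boxtimes> one = a"
  using strict_smc_unfolded by simp_all

lemma ar_sym[simp]: "ob a \<Longrightarrow> ob b \<Longrightarrow> ar (sym a b)"
  and dom_sym[simp]: "ob a \<Longrightarrow> ob b \<Longrightarrow> dom (sym a b) = a \<boxtimes> b"
  and cod_sym[simp]: "ob a \<Longrightarrow> ob b \<Longrightarrow> cod (sym a b) = b \<boxtimes> a"
  using strict_smc_unfolded by simp_all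

lemma cmp_idm_right[simp]: "ar f \<Longrightarrow> a = dom f \<Longrightarrow> f \<odot> idm a = f"
  and cmp_idm_left[simp]: "ar f \<Longrightarrow> a = cod f \<Longrightarrow> idm a \<odot> f = f"
  using strict_smc_unfolded by simp_all

lemma cmp_assoc[simp]: "ar f \<Longrightarrow> ar g \<Longrightarrow> ar h \<Longrightarrow> cod f = dom g \<Longrightarrow> cod g = dom h \<Longrightarrow>
   (h \<odot> g) \<odot> f = h \<odot> (g \<odot> f)"
  using strict_smc_unfolded by simp_all

lemma tar_idm_idm: "ob a \<Longrightarrow> ob b \<Longrightarrow> idm a \<otimes> idm b = idm (a \<boxtimes> b)"
  using strict_smc_unfolded by simp_all

lemma interchange[simp]:
  "ar f \<Longrightarrow> ar g \<Longrightarrow> ar f' \<Longrightarrow> ar g' \<Longrightarrow> cod f = dom g \<Longrightarrow> cod f' = dom g' \<Longrightarrow>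
   (g \<otimes> g') \<odot> (f \<otimes> f') = (g \<odot> f) \<otimes> (g' \<odot> f')"
  using strict_smc_unfolded by simp_all

lemma tar_assoc[simp]: "ar f \<Longrightarrow> ar g \<Longrightarrow> ar h \<Longrightarrow> (f \<otimes> g) \<otimes> h = f \<otimes> (g \<otimes> h)"
  using strict_smc_unfolded by simp_all

lemma tar_one_left[simp]: "ar f \<Longrightarrow> idm one \<otimes> f = f"
  and tar_one_right[simp]: "ar f \<Longrightarrow> f \<otimes> idm one = f"
  using strict_smc_unfolded by simp_all

lemma sym_nat: "ar f \<Longrightarrow> ar g \<Longrightarrow>
   sym (cod f) (cod g) \<odot> (f \<otimes> g) = (g \<otimes> f) \<odot> sym (dom f) (dom g)"
  using strict_smc_unfolded by simp_all

lemma sym_inv[simp]: "ob a \<Longrightarrow> ob b \<Longrightarrow> sym b a \<odot> sym a b = idm (a \<boxtimes> b)"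
  using strict_smc_unfolded by simp_all

lemma sym_tob_right: "ob a \<Longrightarrow> ob b \<Longrightarrow> ob c \<Longrightarrow>
   sym a (b \<boxtimes> c) = (idm b \<otimes> sym a c) \<odot> (sym a b \<otimes> idm c)"
  using strict_smc_unfolded by simp_all

lemma idm_tob[simp]: "ob a \<Longrightarrow> ob b \<Longrightarrow> idm (a \<boxtimes> b) = idm a \<otimes> idm b"
  by (simp add: tar_idm_idm)

text \<open>The simplifier keeps composites right-nested (\<open>cmp_assoc\<close>), so a rule
  about a composite \<open>g \<odot> f\<close> is only found inside longer chains in its variant for
  \<open>g \<odot> f \<odot> k\<close>; the suffix \<open>_k\<close> marks these variants.\<close>

lemma interchange_k[simp]:
  "ar f \<Longrightarrow> ar g \<Longrightarrow> ar f' \<Longrightarrow> ar g' \<Longrightarrow> cod f = dom g \<Longrightarrow> cod f' = dom g' \<Longrightarrow>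
   ar k \<Longrightarrow> cod k = dom f \<boxtimes> dom f' \<Longrightarrow>
   (g \<otimes> g') \<odot> (f \<otimes> f') \<odot> k = ((g \<odot> f) \<otimes> (g' \<odot> f')) \<odot> k"
  by (simp flip: cmp_assoc)

lemma interchange_merge[simp]: "ar f \<Longrightarrow> ar f' \<Longrightarrow> ar f'' \<Longrightarrow> ar g \<Longrightarrow> ar g' \<Longrightarrow>
   cod f \<boxtimes> cod f' = dom g \<Longrightarrow> cod f'' = dom g' \<Longrightarrow>
   (g \<otimes> g') \<odot> (f \<otimes> f' \<otimes> f'') = (g \<odot> (f \<otimes> f')) \<otimes> (g' \<odot> f'')"
  by (simp flip: tar_assoc)

lemma interchange_merge_k[simp]: "ar f \<Longrightarrow> ar f' \<Longrightarrow> ar f'' \<Longrightarrow> ar g \<Longrightarrow> ar g' \<Longrightarrow>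
   cod f \<boxtimes> cod f' = dom g \<Longrightarrow> cod f'' = dom g' \<Longrightarrow>
   ar k \<Longrightarrow> cod k = dom f \<boxtimes> dom f' \<boxtimes> dom f'' \<Longrightarrow>
   (g \<otimes> g') \<odot> (f \<otimes> f' \<otimes> f'') \<odot> k = ((g \<odot> (f \<otimes> f')) \<otimes> (g' \<odot> f'')) \<odot> k"
  by (simp flip: cmp_assoc tar_assoc)

lemma interchange_split[simp]: "ar f \<Longrightarrow> ar f' \<Longrightarrow> ar g'' \<Longrightarrow> ar g \<Longrightarrow> ar g' \<Longrightarrow>
   cod f = dom g \<boxtimes> dom g' \<Longrightarrow> cod f' = dom g'' \<Longrightarrow>
   (g \<otimes> g' \<otimes> g'') \<odot> (f \<otimes> f') = ((g \<otimes> g') \<odot> f) \<otimes> (g'' \<odot> f')"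
  by (simp flip: tar_assoc)

lemma interchange_split_k[simp]: "ar f \<Longrightarrow> ar f' \<Longrightarrow> ar g'' \<Longrightarrow> ar g \<Longrightarrow> ar g' \<Longrightarrow>
   cod f = dom g \<boxtimes> dom g' \<Longrightarrow> cod f' = dom g'' \<Longrightarrow> ar k \<Longrightarrow> cod k = dom f \<boxtimes> dom f' \<Longrightarrow>
   (g \<otimes> g' \<otimes> g'') \<odot> (f \<otimes> f') \<odot> k = (((g \<otimes> g') \<odot> f) \<otimes> (g'' \<odot> f')) \<odot> k"
  by (simp flip: cmp_assoc tar_assoc)

lemmas interchange_rules =
  interchange interchange_k interchange_merge interchange_merge_k interchange_split interchange_split_k

lemma cmp_tar_identity_right[simp]:
  "ar f \<Longrightarrow> ar k \<Longrightarrow> ob a \<Longrightarrow> k = idm (cod k) \<Longrightarrow> dom f = a \<boxtimes> cod k \<Longrightarrow> f \<odot> (idm a \<otimes> k) = f"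
  by (metis ar_idm cod_idm dom_idm cmp_idm_right idm_tob ob_cod)

lemma cmp_tar_identity_left[simp]:
  "ar f \<Longrightarrow> ar k \<Longrightarrow> ob a \<Longrightarrow> k = idm (cod k) \<Longrightarrow> cod f = a \<boxtimes> cod k \<Longrightarrow> (idm a \<otimes> k) \<odot> f = f"
  by (metis ar_idm cod_idm dom_idm cmp_idm_left idm_tob ob_cod)

lemma tar_cmp_factor_left: "ar f \<Longrightarrow> ar g \<Longrightarrow> ar k \<Longrightarrow> cod f = dom g \<Longrightarrow>
   (g \<odot> f) \<otimes> k = (g \<otimes> k) \<odot> (f \<otimes> idm (dom k))"
  by simp

lemma tar_cmp_factor_right: "ar f \<Longrightarrow> ar g \<Longrightarrow> ar k \<Longrightarrow> cod f = dom g \<Longrightarrow>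
   k \<otimes> (g \<odot> f) = (k \<otimes> g) \<odot> (idm (dom k) \<otimes> f)"
  by simp

lemmas tar_cmp_factor = tar_cmp_factor_left tar_cmp_factor_right

lemma tar_cmp_factor_left_k: "ar f \<Longrightarrow> ar g \<Longrightarrow> ar k \<Longrightarrow> cod f = dom g \<Longrightarrow>
   ar j \<Longrightarrow> cod j = dom f \<boxtimes> dom k \<Longrightarrow>
   ((g \<odot> f) \<otimes> k) \<odot> j = (g \<otimes> k) \<odot> (f \<otimes> idm (dom k)) \<odot> j"
  by (subst tar_cmp_factor_left) simp_all

lemma tar3_cmp_factor_right: "ar f \<Longrightarrow> ar g \<Longrightarrow> ar k \<Longrightarrow> ar k' \<Longrightarrow> cod f = dom g \<Longrightarrow>
   k \<otimes> k' \<otimes> (g \<odot> f) = (k \<otimes> k' \<otimes> g) \<odot> (idm (dom k) \<otimes> idm (dom k') \<otimes> f)"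
  by (simp flip: tar_assoc)

text \<open>An identity wrapper: a subterm \<open>frozen x\<close> is left alone by the simplifier,
  which is how the proofs below steer its normalisation.\<close>

definition frozen where "frozen x = x"

lemma frozen_type[simp]: "ar (frozen x) = ar x" "dom (frozen x) = dom x" "cod (frozen x) = cod x"
  unfolding frozen_def by simp_all

lemma cmp_eq_extend: "A = B \<odot> B' \<Longrightarrow> ar B \<Longrightarrow> ar B' \<Longrightarrow> ar k \<Longrightarrow> cod B' = dom B \<Longrightarrow> cod k = dom B' \<Longrightarrow>
  A \<odot> k = B \<odot> B' \<odot> k"
  by simp

lemma tar_to_unit_right: "ar F \<Longrightarrow> ar Z \<Longrightarrow> cod Z = one \<Longrightarrow> F \<otimes> Z = F \<odot> (idm (dom F) \<otimes> Z)"
  using interchange[of "idm (dom F)" F Z "idm one"] by simp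

lemma tar_to_unit_left: "ar F \<Longrightarrow> ar Z \<Longrightarrow> cod Z = one \<Longrightarrow> Z \<otimes> F = F \<odot> (Z \<otimes> idm (dom F))"
  using interchange[of Z "idm one" "idm (dom F)" F] by simp

lemma tar_from_unit_right: "ar A \<Longrightarrow> ar B \<Longrightarrow> dom B = one \<Longrightarrow> (idm (cod A) \<otimes> B) \<odot> A = A \<otimes> B"
  using interchange[of A "idm (cod A)" "idm one" B] by simp

lemma tar_from_unit_left: "ar A \<Longrightarrow> ar B \<Longrightarrow> dom B = one \<Longrightarrow> (B \<otimes> idm (cod A)) \<odot> A = B \<otimes> A"
  using interchange[of "idm one" B A "idm (cod A)"] by simp

lemma cmp_tar_to_unit:
  "ar g \<Longrightarrow> ar A \<Longrightarrow> ar Z \<Longrightarrow> cod A = dom g \<Longrightarrow> cod Z = one \<Longrightarrow> g \<odot> (A \<otimes> Z) = (g \<odot> A) \<otimes> Z"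
  "ar g \<Longrightarrow> ar A \<Longrightarrow> ar Z \<Longrightarrow> cod A = dom g \<Longrightarrow> cod Z = one \<Longrightarrow> g \<odot> (Z \<otimes> A) = Z \<otimes> (g \<odot> A)"
  using interchange[of A g Z "idm one"] interchange[of Z "idm one" A g] by simp_all

lemma tar_from_unit_cmp:
  "ar Z \<Longrightarrow> ar B \<Longrightarrow> ar A \<Longrightarrow> dom Z = one \<Longrightarrow> cod A = dom B \<Longrightarrow> (Z \<otimes> B) \<odot> A = Z \<otimes> (B \<odot> A)"
  using interchange[of "idm one" Z A B] by simp

lemma sym_nat_k: "ar f \<Longrightarrow> ar g \<Longrightarrow> ar k \<Longrightarrow> cod k = dom f \<boxtimes> dom g \<Longrightarrow>
   sym (cod f) (cod g) \<odot> (f \<otimes> g) \<odot> k = (g \<otimes> f) \<odot> sym (dom f) (dom g) \<odot> k"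
  using sym_nat[of f g] by (simp flip: cmp_assoc)

lemma sym_nat_idm: "ar t \<Longrightarrow> ob a \<Longrightarrow> sym a (cod t) \<odot> (idm a \<otimes> t) = (t \<otimes> idm a) \<odot> sym a (dom t)"
  using sym_nat[of "idm a" t] by simp

lemma sym_nat_idm_k: "ar t \<Longrightarrow> ob a \<Longrightarrow> ar k \<Longrightarrow> cod k = a \<boxtimes> dom t \<Longrightarrow>
  sym a (cod t) \<odot> (idm a \<otimes> t) \<odot> k = (t \<otimes> idm a) \<odot> sym a (dom t) \<odot> k"
proof -
  assume a: "ar t" "ob a" "ar k" "cod k = a \<boxtimes> dom t"
  have "(sym a (cod t) \<odot> (idm a \<otimes> t)) \<odot> k = (t \<otimes> idm a) \<odot> sym a (dom t) \<odot> k"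
    by (rule cmp_eq_extend[OF sym_nat_idm]) (use a in simp_all)
  with a show ?thesis by simp
qed

lemma sym_inv_k: "ob a \<Longrightarrow> ob b \<Longrightarrow> ar k \<Longrightarrow> cod k = a \<boxtimes> b \<Longrightarrow> sym b a \<odot> sym a b \<odot> k = k"
  by (simp flip: cmp_assoc)

lemma sym_one_right: "ob a \<Longrightarrow> sym a one = idm a"
proof -
  assume a: "ob a"
  have idem: "sym a one = sym a one \<odot> sym a one"
    using sym_tob_right[of a one one] a by simp
  have "idm a = sym one a \<odot> sym a one" using a by simp
  also have "\<dots> = sym one a \<odot> sym a one \<odot> sym a one" by (subst idem) (rule refl)
  also have "\<dots> = sym a one" using a by (simp flip: cmp_assoc)
  finally show ?thesis by simp
qed

lemma sym_one_left: "ob a \<Longrightarrow> sym one a = idm a"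
  using sym_inv[of one a] by (simp add: sym_one_right)

lemma sym_tob_left: "ob a \<Longrightarrow> ob b \<Longrightarrow> ob c \<Longrightarrow>
   sym (a \<boxtimes> b) c = (sym a c \<otimes> idm b) \<odot> (idm a \<otimes> sym b c)"
proof -
  assume o: "ob a" "ob b" "ob c"
  let ?R = "(sym a c \<otimes> idm b) \<odot> (idm a \<otimes> sym b c)"
  have "?R \<odot> sym c (a \<boxtimes> b) = idm (c \<boxtimes> a \<boxtimes> b)"
    using o by (simp add: sym_tob_right)
  hence "sym (a \<boxtimes> b) c = (?R \<odot> sym c (a \<boxtimes> b)) \<odot> sym (a \<boxtimes> b) c" using o by simp
  also have "\<dots> = ?R" using o by (simp del: idm_tob)
  finally show ?thesis .
qed

end

text \<open>Facts about the comultiplication of a Hopf monoid are obtained from the dual facts about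
  its multiplication, read in the opposite category.\<close>

definition opC :: "('o, 'm) smcat \<Rightarrow> ('o, 'm) smcat" where
  "opC C = C\<lparr>c_dom := c_cod C, c_cod := c_dom C, c_cmp := (\<lambda>g f. c_cmp C f g),
              c_sym := (\<lambda>a b. c_sym C b a)\<rparr>"

lemma opC_simps[simp]: "c_ob (opC C) = c_ob C" "c_ar (opC C) = c_ar C" "c_dom (opC C) = c_cod C"
  "c_cod (opC C) = c_dom C" "c_id (opC C) = c_id C" "c_cmp (opC C) g f = c_cmp C f g"
  "c_tob (opC C) = c_tob C" "c_tar (opC C) = c_tar C" "c_unit (opC C) = c_unit C"
  "c_sym (opC C) a b = c_sym C b a"
  unfolding opC_def by simp_all

lemma (in smc) strict_smc_opC: "strict_smc (opC C)"
  unfolding strict_smc_def c_hom_def opC_simps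
  apply (intro conjI allI impI)
  apply (simp_all del: interchange_rules idm_tob add: tar_idm_idm interchange sym_tob_left)
  apply (metis sym_nat)
  done

locale smc_object = smc C for C :: "('o, 'm) smcat" +
  fixes H :: 'o
  assumes ob_H[simp]: "ob H"
begin

abbreviation \<iota> where "\<iota> \<equiv> idm H"
abbreviation \<sigma> where "\<sigma> \<equiv> sym H H"

end

section \<open>Hopf monoids\<close>

locale hopf = smc_object C H for C :: "('o, 'm) smcat" and H +
  fixes m u D e S :: 'm
  assumes is_hopf_monoid: "hopf_monoid C H m u D e S"
begin

lemma m_type[simp]: "ar m" "dom m = H \<boxtimes> H" "cod m = H"
  and u_type[simp]: "ar u" "dom u = one" "cod u = H"
  and D_type[simp]: "ar D" "dom D = H" "cod D = H \<boxtimes> H"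
  and e_type[simp]: "ar e" "dom e = H" "cod e = one"
  and S_type[simp]: "ar S" "dom S = H" "cod S = H"
  using is_hopf_monoid unfolding hopf_monoid_def c_hom_def by auto

lemma m_assoc: "m \<odot> (m \<otimes> \<iota>) = m \<odot> (\<iota> \<otimes> m)"
  and m_unit_left[simp]: "m \<odot> (u \<otimes> \<iota>) = \<iota>"
  and m_unit_right[simp]: "m \<odot> (\<iota> \<otimes> u) = \<iota>"
  and D_coassoc: "(D \<otimes> \<iota>) \<odot> D = (\<iota> \<otimes> D) \<odot> D"
  and D_counit_left[simp]: "(e \<otimes> \<iota>) \<odot> D = \<iota>"
  and D_counit_right[simp]: "(\<iota> \<otimes> e) \<odot> D = \<iota>"
  and D_m: "D \<odot> m = (m \<otimes> m) \<odot> (\<iota> \<otimes> \<sigma> \<otimes> \<iota>) \<odot> (D \<otimes> D)"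
  and e_m: "e \<odot> m = e \<otimes> e"
  and D_u: "D \<odot> u = u \<otimes> u"
  and e_u[simp]: "e \<odot> u = idm one"
  and antipode_left: "m \<odot> (S \<otimes> \<iota>) \<odot> D = u \<odot> e"
  and antipode_right: "m \<odot> (\<iota> \<otimes> S) \<odot> D = u \<odot> e"
  using is_hopf_monoid unfolding hopf_monoid_def by simp_all

lemma ll_hopf_module_regular: "ll_hopf_module C H m D H m D"
  unfolding ll_hopf_module_def by (rule D_m)

definition D2 where "D2 = (\<iota> \<otimes> \<sigma> \<otimes> \<iota>) \<odot> (D \<otimes> D)"
lemma D2_type[simp]: "ar D2" "dom D2 = H \<boxtimes> H" "cod D2 = H \<boxtimes> H \<boxtimes> H \<boxtimes> H"
  unfolding D2_def by simp_all

lemma sym_nat_D_right: "sym H (H \<boxtimes> H) \<odot> (\<iota> \<otimes> D) = (D \<otimes> \<iota>) \<odot> \<sigma>"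
  using sym_nat[of \<iota> D] by simp
lemma sym_nat_D_left: "sym (H \<boxtimes> H) H \<odot> (D \<otimes> \<iota>) = (\<iota> \<otimes> D) \<odot> \<sigma>"
  using sym_nat[of D \<iota>] by simp

definition D3 where "D3 = (D \<otimes> \<iota>) \<odot> D"
lemma D3_type[simp]: "ar D3" "dom D3 = H" "cod D3 = H \<boxtimes> H \<boxtimes> H"
  unfolding D3_def by simp_all
lemma D3_fold[simp]: "(D \<otimes> \<iota>) \<odot> D = D3" "(\<iota> \<otimes> D) \<odot> D = D3"
  unfolding D3_def by (simp_all add: D_coassoc)
lemma D3_fold_k[simp]: "ar k \<Longrightarrow> cod k = H \<Longrightarrow> (D \<otimes> \<iota>) \<odot> D \<odot> k = D3 \<odot> k"
  "ar k \<Longrightarrow> cod k = H \<Longrightarrow> (\<iota> \<otimes> D) \<odot> D \<odot> k = D3 \<odot> k"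
  by (simp_all flip: cmp_assoc)

lemma D2_iter_left_expand: "(D2 \<otimes> \<iota> \<otimes> \<iota>) \<odot> D2 = (\<iota>\<otimes>\<sigma>\<otimes>\<iota>\<otimes>\<iota>\<otimes>\<iota>)\<odot>(D\<otimes>D\<otimes>\<iota>\<otimes>\<iota>)\<odot>(\<iota>\<otimes>\<sigma>\<otimes>\<iota>)\<odot>(D\<otimes>D)"
  unfolding D2_def by (subst tar_cmp_factor_left) simp_all

lemma D2_iter_left_via_D3: "(D2 \<otimes> \<iota> \<otimes> \<iota>) \<odot> D2 = (\<iota>\<otimes>\<sigma>\<otimes>\<iota>\<otimes>\<iota>\<otimes>\<iota>)\<odot>(\<iota>\<otimes>\<iota>\<otimes>sym H (H \<boxtimes> H)\<otimes>\<iota>)\<odot>frozen (D3 \<otimes> D3)"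
proof -
  have "(D2 \<otimes> \<iota> \<otimes> \<iota>) \<odot> D2 = (\<iota>\<otimes>\<sigma>\<otimes>\<iota>\<otimes>\<iota>\<otimes>\<iota>)\<odot>(D\<otimes>(sym H (H \<boxtimes> H) \<odot> (\<iota>\<otimes>D))\<otimes>\<iota>)\<odot>(D\<otimes>D)"
    unfolding D2_iter_left_expand by (simp add: sym_nat_D_right)
  also have "\<dots> = (\<iota>\<otimes>\<sigma>\<otimes>\<iota>\<otimes>\<iota>\<otimes>\<iota>)\<odot>(\<iota>\<otimes>\<iota>\<otimes>sym H (H \<boxtimes> H)\<otimes>\<iota>)\<odot>(D\<otimes>\<iota>\<otimes>D\<otimes>\<iota>)\<odot>frozen(D\<otimes>D)"
    by simp (simp add: frozen_def)
  also have "\<dots> = (\<iota>\<otimes>\<sigma>\<otimes>\<iota>\<otimes>\<iota>\<otimes>\<iota>)\<odot>(\<iota>\<otimes>\<iota>\<otimes>sym H (H \<boxtimes> H)\<otimes>\<iota>)\<odot>frozen (D3 \<otimes> D3)"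
    by (simp add: frozen_def)
  finally show ?thesis .
qed

lemma D2_iter_right_via_D3: "(\<iota> \<otimes> \<iota> \<otimes> D2) \<odot> D2 = (\<iota>\<otimes>\<iota>\<otimes>\<iota>\<otimes>\<sigma>\<otimes>\<iota>)\<odot>(\<iota>\<otimes>sym (H \<boxtimes> H) H\<otimes>\<iota>\<otimes>\<iota>)\<odot>frozen (D3 \<otimes> D3)"
proof -
  have "(\<iota> \<otimes> \<iota> \<otimes> D2) \<odot> D2 = (\<iota>\<otimes>\<iota>\<otimes>\<iota>\<otimes>\<sigma>\<otimes>\<iota>)\<odot>(\<iota>\<otimes>\<iota>\<otimes>D\<otimes>D)\<odot>(\<iota>\<otimes>\<sigma>\<otimes>\<iota>)\<odot>frozen(D\<otimes>D)"
  proof -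
    have "\<iota> \<otimes> \<iota> \<otimes> D2 = (\<iota>\<otimes>\<iota>\<otimes>\<iota>\<otimes>\<sigma>\<otimes>\<iota>)\<odot>(\<iota>\<otimes>\<iota>\<otimes>D\<otimes>D)"
      unfolding D2_def by (subst tar3_cmp_factor_right) simp_all
    hence "(\<iota> \<otimes> \<iota> \<otimes> D2) \<odot> D2 = (\<iota>\<otimes>\<iota>\<otimes>\<iota>\<otimes>\<sigma>\<otimes>\<iota>)\<odot>((\<iota>\<otimes>\<iota>\<otimes>D\<otimes>D) \<odot> D2)"
      by (rule cmp_eq_extend) simp_all
    thus ?thesis unfolding D2_def by (simp add: frozen_def)
  qed
  also have "\<dots> = (\<iota>\<otimes>\<iota>\<otimes>\<iota>\<otimes>\<sigma>\<otimes>\<iota>)\<odot>(\<iota>\<otimes>(sym (H \<boxtimes> H) H \<odot> (D\<otimes>\<iota>))\<otimes>D)\<odot>frozen(D\<otimes>D)"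
    by (simp add: sym_nat_D_left)
  also have "\<dots> = (\<iota>\<otimes>\<iota>\<otimes>\<iota>\<otimes>\<sigma>\<otimes>\<iota>)\<odot>(\<iota>\<otimes>sym (H \<boxtimes> H) H\<otimes>\<iota>\<otimes>\<iota>)\<odot>(\<iota>\<otimes>D\<otimes>\<iota>\<otimes>D)\<odot>frozen(D\<otimes>D)"
    by simp
  also have "\<dots> = (\<iota>\<otimes>\<iota>\<otimes>\<iota>\<otimes>\<sigma>\<otimes>\<iota>)\<odot>(\<iota>\<otimes>sym (H \<boxtimes> H) H\<otimes>\<iota>\<otimes>\<iota>)\<odot>frozen (D3 \<otimes> D3)"
    by (simp add: frozen_def)
  finally show ?thesis .
qed

lemma D2_coassoc: "(D2 \<otimes> \<iota> \<otimes> \<iota>) \<odot> D2 = (\<iota> \<otimes> \<iota> \<otimes> D2) \<odot> D2"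
proof -
  have 1: "\<iota>\<otimes>\<iota>\<otimes>sym H (H \<boxtimes> H)\<otimes>\<iota> = (\<iota>\<otimes>\<iota>\<otimes>\<iota>\<otimes>\<sigma>\<otimes>\<iota>) \<odot> (\<iota>\<otimes>\<iota>\<otimes>\<sigma>\<otimes>\<iota>\<otimes>\<iota>)"
    by (simp add: sym_tob_right tar_cmp_factor del: interchange_rules)
  have 2: "\<iota>\<otimes>sym (H \<boxtimes> H) H\<otimes>\<iota>\<otimes>\<iota> = (\<iota>\<otimes>\<sigma>\<otimes>\<iota>\<otimes>\<iota>\<otimes>\<iota>) \<odot> (\<iota>\<otimes>\<iota>\<otimes>\<sigma>\<otimes>\<iota>\<otimes>\<iota>)"
    by (simp add: sym_tob_left tar_cmp_factor del: interchange_rules)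
  have "(D2 \<otimes> \<iota> \<otimes> \<iota>) \<odot> D2 = (\<iota>\<otimes>\<sigma>\<otimes>\<iota>\<otimes>\<iota>\<otimes>\<iota>) \<odot> (\<iota>\<otimes>\<iota>\<otimes>\<iota>\<otimes>\<sigma>\<otimes>\<iota>) \<odot> frozen ((\<iota>\<otimes>\<iota>\<otimes>\<sigma>\<otimes>\<iota>\<otimes>\<iota>) \<odot> frozen (D3 \<otimes> D3))"
    unfolding D2_iter_left_via_D3 1 by (simp add: frozen_def)
  also have "\<dots> = (\<iota>\<otimes>\<iota>\<otimes>\<iota>\<otimes>\<sigma>\<otimes>\<iota>) \<odot> (\<iota>\<otimes>\<sigma>\<otimes>\<iota>\<otimes>\<iota>\<otimes>\<iota>) \<odot> frozen ((\<iota>\<otimes>\<iota>\<otimes>\<sigma>\<otimes>\<iota>\<otimes>\<iota>) \<odot> frozen (D3 \<otimes> D3))"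
    by simp
  also have "\<dots> = (\<iota> \<otimes> \<iota> \<otimes> D2) \<odot> D2"
    unfolding D2_iter_right_via_D3 2 by (simp add: frozen_def)
  finally show ?thesis .
qed

lemma D_m_D2: "D \<odot> m = (m \<otimes> m) \<odot> D2" unfolding D2_def using D_m by simp

lemma sym_nat_e: "(\<iota> \<otimes> e) \<odot> \<sigma> = e \<otimes> \<iota>" "(e \<otimes> \<iota>) \<odot> \<sigma> = \<iota> \<otimes> e"
  using sym_nat[of \<iota> e] sym_nat[of e \<iota>] by (simp_all add: sym_one_right sym_one_left)

lemma D2_counit: "(\<iota>\<otimes>\<iota>\<otimes>e\<otimes>e) \<odot> D2 = \<iota> \<otimes> \<iota>" "(e\<otimes>e\<otimes>\<iota>\<otimes>\<iota>) \<odot> D2 = \<iota> \<otimes> \<iota>"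
  unfolding D2_def by (simp_all add: sym_nat_e)

lemma m_tar_u[simp]:
  "ar A \<Longrightarrow> ar Z \<Longrightarrow> cod A = H \<Longrightarrow> cod Z = one \<Longrightarrow> m \<odot> (A \<otimes> (u \<odot> Z)) = A \<otimes> Z"
  "ar A \<Longrightarrow> ar Z \<Longrightarrow> cod A = H \<Longrightarrow> cod Z = one \<Longrightarrow> m \<odot> ((u \<odot> Z) \<otimes> A) = Z \<otimes> A"
  "ar A \<Longrightarrow> cod A = H \<Longrightarrow> m \<odot> (A \<otimes> u) = A"
  "ar A \<Longrightarrow> cod A = H \<Longrightarrow> m \<odot> (u \<otimes> A) = A"
  using cmp_eq_extend[OF m_unit_right[symmetric], of "A \<otimes> Z"]
    cmp_eq_extend[OF m_unit_left[symmetric], of "Z \<otimes> A"]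
    cmp_eq_extend[OF m_unit_right[symmetric], of A] tar_from_unit_right[of A u]
    cmp_eq_extend[OF m_unit_left[symmetric], of A] tar_from_unit_left[of A u]
  by simp_all

lemma m_tar_u_k[simp]:
  "ar A \<Longrightarrow> ar Z \<Longrightarrow> cod A = H \<Longrightarrow> cod Z = one \<Longrightarrow> ar k \<Longrightarrow> cod k = dom A \<boxtimes> dom Z \<Longrightarrow>
    m \<odot> (A \<otimes> (u \<odot> Z)) \<odot> k = (A \<otimes> Z) \<odot> k"
  "ar A \<Longrightarrow> ar Z \<Longrightarrow> cod A = H \<Longrightarrow> cod Z = one \<Longrightarrow> ar k \<Longrightarrow> cod k = dom Z \<boxtimes> dom A \<Longrightarrow>
    m \<odot> ((u \<odot> Z) \<otimes> A) \<odot> k = (Z \<otimes> A) \<odot> k"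
  "ar A \<Longrightarrow> cod A = H \<Longrightarrow> ar k \<Longrightarrow> cod k = dom A \<Longrightarrow> m \<odot> (A \<otimes> u) \<odot> k = A \<odot> k"
  "ar A \<Longrightarrow> cod A = H \<Longrightarrow> ar k \<Longrightarrow> cod k = dom A \<Longrightarrow> m \<odot> (u \<otimes> A) \<odot> k = A \<odot> k"
  by (simp_all flip: cmp_assoc)

text \<open>\<open>S \<circ> m\<close> is a left and \<open>antimult_S\<close> a right inverse of \<open>m\<close> in the convolution monoid of
  morphisms \<open>H \<otimes> H \<rightarrow> H\<close>, so the two coincide.\<close>

definition conv where "conv F G = m \<odot> (F \<otimes> G) \<odot> D2"
definition conv_unit where "conv_unit = u \<odot> (e \<otimes> e)"
abbreviation "binop F \<equiv> ar F \<and> dom F = H \<boxtimes> H \<and> cod F = H"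

lemma conv_type[simp]: "binop F \<Longrightarrow> binop G \<Longrightarrow> ar (conv F G)"
  "binop F \<Longrightarrow> binop G \<Longrightarrow> dom (conv F G) = H \<boxtimes> H"
  "binop F \<Longrightarrow> binop G \<Longrightarrow> cod (conv F G) = H"
  unfolding conv_def by simp_all
lemma conv_unit_type[simp]: "ar conv_unit" "dom conv_unit = H \<boxtimes> H" "cod conv_unit = H"
  unfolding conv_unit_def by simp_all

lemma m_assoc_k: "ar k \<Longrightarrow> cod k = H \<boxtimes> H \<boxtimes> H \<Longrightarrow> m \<odot> (m \<otimes> \<iota>) \<odot> k = m \<odot> (\<iota> \<otimes> m) \<odot> k"
  using m_assoc by (simp flip: cmp_assoc)

lemma conv_assoc: "binop F \<Longrightarrow> binop G \<Longrightarrow> binop K \<Longrightarrow> conv (conv F G) K = conv F (conv G K)"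
proof -
  assume a: "binop F" "binop G" "binop K"
  have "conv (conv F G) K = m \<odot> (m \<otimes> \<iota>) \<odot> (F \<otimes> G \<otimes> K) \<odot> frozen ((D2 \<otimes> \<iota> \<otimes> \<iota>) \<odot> D2)"
    unfolding conv_def using a by (simp add: frozen_def)
  also have "\<dots> = m \<odot> (\<iota> \<otimes> m) \<odot> (F \<otimes> G \<otimes> K) \<odot> frozen ((\<iota> \<otimes> \<iota> \<otimes> D2) \<odot> D2)"
    using a by (subst m_assoc_k) (simp_all add: D2_coassoc)
  also have "\<dots> = conv F (conv G K)"
    unfolding conv_def using a by (simp add: frozen_def)
  finally show ?thesis .
qed

lemma conv_unit_neutral: "binop F \<Longrightarrow> conv F conv_unit = F" "binop F \<Longrightarrow> conv conv_unit F = F"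
proof -
  assume a: "binop F"
  have "conv F conv_unit = (F \<otimes> e \<otimes> e) \<odot> D2"
    unfolding conv_def conv_unit_def using a by simp
  also have "\<dots> = F \<odot> frozen ((\<iota>\<otimes>\<iota>\<otimes>e\<otimes>e) \<odot> D2)"
    using a by (subst tar_to_unit_right) (simp_all add: frozen_def)
  finally show "conv F conv_unit = F" using a by (simp add: D2_counit frozen_def)
  have "conv conv_unit F = (e \<otimes> e \<otimes> F) \<odot> D2"
    unfolding conv_def conv_unit_def using a by simp
  also have "\<dots> = ((e \<otimes> e) \<otimes> F) \<odot> D2" using a by simp
  also have "\<dots> = F \<odot> frozen ((e\<otimes>e\<otimes>\<iota>\<otimes>\<iota>) \<odot> D2)"
    using a by (subst tar_to_unit_left) (simp_all add: frozen_def)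
  finally show "conv conv_unit F = F" using a by (simp add: D2_counit frozen_def)
qed

lemma sym_nat_e_tar[simp]: "ar A \<Longrightarrow> dom A = H \<Longrightarrow> cod A = H \<Longrightarrow> (e \<otimes> A) \<odot> \<sigma> = A \<otimes> e"
  "ar A \<Longrightarrow> dom A = H \<Longrightarrow> cod A = H \<Longrightarrow> (A \<otimes> e) \<odot> \<sigma> = e \<otimes> A"
  using sym_nat[of A e] sym_nat[of e A] by (simp_all add: sym_one_right sym_one_left)
lemma antipode_k[simp]: "ar k \<Longrightarrow> cod k = H \<Longrightarrow> m \<odot> (S \<otimes> \<iota>) \<odot> D \<odot> k = u \<odot> e \<odot> k"
  "ar k \<Longrightarrow> cod k = H \<Longrightarrow> m \<odot> (\<iota> \<otimes> S) \<odot> D \<odot> k = u \<odot> e \<odot> k"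
  using antipode_left antipode_right by (simp_all flip: cmp_assoc)
lemmas antipode[simp] = antipode_left antipode_right

definition antimult_S where "antimult_S = m \<odot> (S \<otimes> S) \<odot> \<sigma>"
lemma antimult_S_type[simp]: "ar antimult_S" "dom antimult_S = H \<boxtimes> H" "cod antimult_S = H"
  unfolding antimult_S_def by simp_all

lemma conv_S_m_m: "conv (S \<odot> m) m = conv_unit"
proof -
  have "conv (S \<odot> m) m = m \<odot> (S \<otimes> \<iota>) \<odot> frozen ((m \<otimes> m) \<odot> D2)"
    unfolding conv_def by (simp add: frozen_def)
  also have "\<dots> = m \<odot> (S \<otimes> \<iota>) \<odot> D \<odot> m"
    by (simp add: frozen_def D_m_D2)
  also have "\<dots> = conv_unit" unfolding conv_unit_def by (simp add: e_m)
  finally show ?thesis .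
qed

lemma m_m_m_k: "ar V \<Longrightarrow> cod V = H \<boxtimes> H \<Longrightarrow> ar k \<Longrightarrow> cod k = H \<boxtimes> H \<boxtimes> dom V \<Longrightarrow>
  m \<odot> (m \<otimes> (m \<odot> V)) \<odot> k = m \<odot> (\<iota> \<otimes> m) \<odot> (\<iota> \<otimes> m \<otimes> \<iota>) \<odot> (\<iota> \<otimes> \<iota> \<otimes> V) \<odot> k"
proof -
  assume a: "ar V" "cod V = H \<boxtimes> H" "ar k" "cod k = H \<boxtimes> H \<boxtimes> dom V"
  have "m \<odot> (m \<otimes> (m \<odot> V)) \<odot> k = m \<odot> (m \<otimes> \<iota>) \<odot> (\<iota> \<otimes> \<iota> \<otimes> m) \<odot> (\<iota> \<otimes> \<iota> \<otimes> V) \<odot> k"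
    using a by simp
  also have "\<dots> = m \<odot> (\<iota> \<otimes> m) \<odot> (\<iota> \<otimes> \<iota> \<otimes> m) \<odot> (\<iota> \<otimes> \<iota> \<otimes> V) \<odot> k"
    using a by (subst m_assoc_k) simp_all
  also have "\<dots> = m \<odot> (\<iota> \<otimes> (m \<odot> (\<iota> \<otimes> m))) \<odot> (\<iota> \<otimes> \<iota> \<otimes> V) \<odot> k"
    using a by simp
  also have "\<dots> = m \<odot> (\<iota> \<otimes> (m \<odot> (m \<otimes> \<iota>))) \<odot> (\<iota> \<otimes> \<iota> \<otimes> V) \<odot> k"
    using a by (simp add: m_assoc)
  also have "\<dots> = m \<odot> (\<iota> \<otimes> m) \<odot> (\<iota> \<otimes> m \<otimes> \<iota>) \<odot> (\<iota> \<otimes> \<iota> \<otimes> V) \<odot> k"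
    using a by simp
  finally show ?thesis .
qed

lemma D2_sym_right: "(\<iota> \<otimes> \<iota> \<otimes> \<sigma>) \<odot> D2 = (\<iota> \<otimes> D \<otimes> \<iota>) \<odot> (\<iota> \<otimes> \<sigma>) \<odot> (D \<otimes> \<iota>)"
proof -
  have "(\<iota> \<otimes> \<iota> \<otimes> \<sigma>) \<odot> D2 = (\<iota> \<otimes> sym H (H \<boxtimes> H)) \<odot> (\<iota> \<otimes> \<iota> \<otimes> D) \<odot> frozen (D \<otimes> \<iota>)"
    unfolding D2_def by (simp add: frozen_def sym_tob_right)
  also have "\<dots> = (\<iota> \<otimes> D \<otimes> \<iota>) \<odot> (\<iota> \<otimes> \<sigma>) \<odot> (D \<otimes> \<iota>)"
    by (simp add: sym_nat_D_right, simp add: frozen_def)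
  finally show ?thesis .
qed

lemma conv_m_antimult_S: "conv m antimult_S = conv_unit"
proof -
  have "conv m antimult_S = m \<odot> (\<iota> \<otimes> m) \<odot> (\<iota> \<otimes> m \<otimes> \<iota>) \<odot> (\<iota> \<otimes> \<iota> \<otimes> S \<otimes> S) \<odot> frozen ((\<iota> \<otimes> \<iota> \<otimes> \<sigma>) \<odot> D2)"
    unfolding conv_def antimult_S_def by (subst m_m_m_k) (simp_all add: frozen_def)
  also have "\<dots> = m \<odot> (\<iota> \<otimes> m) \<odot> (\<iota> \<otimes> m \<otimes> \<iota>) \<odot> (\<iota> \<otimes> \<iota> \<otimes> S \<otimes> S) \<odot> (\<iota> \<otimes> D \<otimes> \<iota>) \<odot> frozen ((\<iota> \<otimes> \<sigma>) \<odot> (D \<otimes> \<iota>))"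
    unfolding D2_sym_right by (simp add: frozen_def)
  also have "\<dots> = m \<odot> (((\<iota> \<otimes> S) \<odot> D) \<otimes> e)"
    by (simp add: frozen_def)
  also have "\<dots> = conv_unit"
    unfolding conv_unit_def by (subst cmp_tar_to_unit) (simp_all add: cmp_tar_to_unit)
  finally show ?thesis .
qed

lemma antipode_anti_mult: "S \<odot> m = m \<odot> (S \<otimes> S) \<odot> \<sigma>"
proof -
  have "S \<odot> m = conv (S \<odot> m) conv_unit" by (simp add: conv_unit_neutral)
  also have "\<dots> = conv (S \<odot> m) (conv m antimult_S)" by (simp add: conv_m_antimult_S)
  also have "\<dots> = conv (conv (S \<odot> m) m) antimult_S" by (simp add: conv_assoc)
  also have "\<dots> = antimult_S" by (simp add: conv_S_m_m conv_unit_neutral)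
  finally show ?thesis unfolding antimult_S_def .
qed

lemma hopf_monoid_opC: "hopf_monoid (opC C) H D e m u S"
  unfolding hopf_monoid_def c_hom_def opC_simps
  by (simp_all add: D_coassoc m_assoc D_m e_m D_u)

lemma antipode_anti_comult: "D \<odot> S = \<sigma> \<odot> (S \<otimes> S) \<odot> D"
proof -
  interpret op: hopf "opC C" H D e m u S
    by (unfold_locales) (simp_all add: strict_smc_opC hopf_monoid_opC)
  from op.antipode_anti_mult show ?thesis by simp
qed

end

section \<open>The pivotal involution\<close>

locale piv = hopf C H m u D e S for C :: "('o, 'm) smcat" and H m u D e S +
  fixes p :: 'm
  assumes is_pivotal: "pivotal_hopf C H m u D e S p"
begin

lemma p_type[simp]: "ar p" "dom p = one" "cod p = H"
  using is_pivotal unfolding pivotal_hopf_def c_hom_def by auto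

lemma D_p: "D \<odot> p = p \<otimes> p"
  and pivotal: "m \<odot> ((m \<odot> (p \<otimes> (S \<odot> S))) \<otimes> (S \<odot> p)) = \<iota>"
  using is_pivotal unfolding pivotal_hopf_def by simp_all

definition T where "T = m \<odot> (p \<otimes> S)"
lemma T_type[simp]: "ar T" "dom T = H" "cod T = H" unfolding T_def by simp_all

lemma m_p_assoc: "ar V \<Longrightarrow> cod V = H \<boxtimes> H \<Longrightarrow> m \<odot> (p \<otimes> (m \<odot> V)) = m \<odot> (m \<otimes> \<iota>) \<odot> (p \<otimes> V)"
proof -
  assume a: "ar V" "cod V = H \<boxtimes> H"
  have "m \<odot> (p \<otimes> (m \<odot> V)) = m \<odot> (\<iota> \<otimes> m) \<odot> (p \<otimes> V)" using a by simp
  also have "\<dots> = m \<odot> (m \<otimes> \<iota>) \<odot> (p \<otimes> V)" using a by (subst m_assoc_k) simp_all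
  finally show ?thesis .
qed

lemma T_m: "T \<odot> m = m \<odot> (T \<otimes> S) \<odot> \<sigma>"
proof -
  have "T \<odot> m = m \<odot> (p \<otimes> (S \<odot> m))" unfolding T_def by (simp add: tar_from_unit_cmp)
  also have "\<dots> = m \<odot> (p \<otimes> (m \<odot> ((S \<otimes> S) \<odot> \<sigma>)))" by (simp add: antipode_anti_mult)
  also have "\<dots> = m \<odot> (m \<otimes> \<iota>) \<odot> (p \<otimes> ((S \<otimes> S) \<odot> \<sigma>))" by (subst m_p_assoc) simp_all
  also have "\<dots> = m \<odot> (m \<otimes> \<iota>) \<odot> (p \<otimes> S \<otimes> S) \<odot> frozen \<sigma>"
    by (subst tar_from_unit_cmp[symmetric]) (simp_all add: frozen_def)
  also have "\<dots> = m \<odot> (T \<otimes> S) \<odot> \<sigma>" unfolding T_def by (simp add: frozen_def)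
  finally show ?thesis .
qed

lemma sym_nat_p: "ar A \<Longrightarrow> dom A = H \<Longrightarrow> cod A = H \<Longrightarrow> \<sigma> \<odot> (p \<otimes> A) = A \<otimes> p"
  "ar A \<Longrightarrow> dom A = H \<Longrightarrow> cod A = H \<Longrightarrow> \<sigma> \<odot> (A \<otimes> p) = p \<otimes> A"
  using sym_nat[of p A] sym_nat[of A p] by (simp_all add: sym_one_right sym_one_left)

lemma T_S: "T \<odot> S = m \<odot> (p \<otimes> (S \<odot> S))" unfolding T_def by (simp add: tar_from_unit_cmp)

lemma T_T[simp]: "T \<odot> T = \<iota>"
proof -
  have "T \<odot> T = T \<odot> (m \<odot> (p \<otimes> S))" by (subst (2) T_def) (rule refl)
  also have "\<dots> = (T \<odot> m) \<odot> (p \<otimes> S)" by simp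
  also have "\<dots> = m \<odot> (T \<otimes> S) \<odot> \<sigma> \<odot> (p \<otimes> S)" unfolding T_m by simp
  also have "\<dots> = m \<odot> ((T \<odot> S) \<otimes> (S \<odot> p))" by (simp add: sym_nat_p)
  also have "\<dots> = \<iota>" unfolding T_S by (rule pivotal)
  finally show ?thesis .
qed

lemma T_T_k[simp]: "ar k \<Longrightarrow> cod k = H \<Longrightarrow> T \<odot> T \<odot> k = k"
  by (simp flip: cmp_assoc)

lemma sym_nat_H: "ar A \<Longrightarrow> dom A = H \<Longrightarrow> cod A = H \<Longrightarrow> \<sigma> \<odot> (\<iota> \<otimes> A) = (A \<otimes> \<iota>) \<odot> \<sigma>"
  "ar A \<Longrightarrow> dom A = H \<Longrightarrow> cod A = H \<Longrightarrow> \<sigma> \<odot> (A \<otimes> \<iota>) = (\<iota> \<otimes> A) \<odot> \<sigma>"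
  using sym_nat[of \<iota> A] sym_nat[of A \<iota>] by simp_all
lemma sym_nat_H_k:
  "ar A \<Longrightarrow> dom A = H \<Longrightarrow> cod A = H \<Longrightarrow> ar k \<Longrightarrow> cod k = H \<boxtimes> H \<Longrightarrow>
    \<sigma> \<odot> (\<iota> \<otimes> A) \<odot> k = (A \<otimes> \<iota>) \<odot> \<sigma> \<odot> k"
  "ar A \<Longrightarrow> dom A = H \<Longrightarrow> cod A = H \<Longrightarrow> ar k \<Longrightarrow> cod k = H \<boxtimes> H \<Longrightarrow>
    \<sigma> \<odot> (A \<otimes> \<iota>) \<odot> k = (\<iota> \<otimes> A) \<odot> \<sigma> \<odot> k"
  by (simp_all flip: cmp_assoc add: sym_nat_H)

definition minus_act where "minus_act = m \<odot> (\<iota> \<otimes> S) \<odot> \<sigma>"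
lemma T_m_T: "T \<odot> m \<odot> (\<iota> \<otimes> T) = minus_act"
proof -
  have "T \<odot> m \<odot> (\<iota> \<otimes> T) = m \<odot> (T \<otimes> S) \<odot> \<sigma> \<odot> (\<iota> \<otimes> T)" by (simp flip: cmp_assoc add: T_m)
  also have "\<dots> = minus_act" unfolding minus_act_def by (simp add: sym_nat_H)
  finally show ?thesis .
qed

lemma D_m_k: "ar k \<Longrightarrow> cod k = H \<boxtimes> H \<Longrightarrow> D \<odot> m \<odot> k = (m \<otimes> m) \<odot> (\<iota> \<otimes> \<sigma> \<otimes> \<iota>) \<odot> (D \<otimes> D) \<odot> k"
  using D_m by (simp flip: cmp_assoc)

lemma D_T: "D \<odot> T = \<sigma> \<odot> (T \<otimes> T) \<odot> D"
proof -
  define X where "X = \<sigma> \<odot> (S \<otimes> S) \<odot> D"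
  have X_type[simp]: "ar X" "dom X = H" "cod X = H \<boxtimes> H" unfolding X_def by simp_all
  have "D \<odot> T = (m \<otimes> m) \<odot> (\<iota> \<otimes> \<sigma> \<otimes> \<iota>) \<odot> (D \<otimes> D) \<odot> (p \<otimes> S)"
    unfolding T_def by (simp add: D_m_k)
  also have "\<dots> = (m \<otimes> m) \<odot> (\<iota> \<otimes> \<sigma> \<otimes> \<iota>) \<odot> (p \<otimes> p \<otimes> X)"
    unfolding X_def by (simp add: D_p antipode_anti_comult)
  also have "(\<iota> \<otimes> \<sigma> \<otimes> \<iota>) \<odot> (p \<otimes> p \<otimes> X) = p \<otimes> ((\<sigma> \<otimes> \<iota>) \<odot> (p \<otimes> X))" by simp
  also have "p \<otimes> X = (p \<otimes> \<iota> \<otimes> \<iota>) \<odot> X" using tar_from_unit_left[of X p] by simp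
  also have "(\<sigma> \<otimes> \<iota>) \<odot> ((p \<otimes> \<iota> \<otimes> \<iota>) \<odot> X) = (\<iota> \<otimes> p \<otimes> \<iota>) \<odot> X" by (simp add: sym_nat_p)
  also have "p \<otimes> ((\<iota> \<otimes> p \<otimes> \<iota>) \<odot> X) = (p \<otimes> \<iota> \<otimes> p \<otimes> \<iota>) \<odot> X" by (simp add: tar_from_unit_cmp)
  also have "(m \<otimes> m) \<odot> ((p \<otimes> \<iota> \<otimes> p \<otimes> \<iota>) \<odot> X) = ((m \<odot> (p \<otimes> \<iota>)) \<otimes> (m \<odot> (p \<otimes> \<iota>))) \<odot> \<sigma> \<odot> (S \<otimes> S) \<odot> D"
    unfolding X_def by simp
  also have "\<dots> = \<sigma> \<odot> (T \<otimes> T) \<odot> D" unfolding T_def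
    using sym_nat_k[of S S, simplified] sym_nat_k[of T T, simplified, unfolded T_def]
    by (simp add: tar_from_unit_cmp)
  finally show ?thesis .
qed

definition minus_coact where "minus_coact = \<sigma> \<odot> (\<iota> \<otimes> T) \<odot> D"
lemma minus_act_type[simp]: "ar minus_act" "dom minus_act = H \<boxtimes> H" "cod minus_act = H"
  and minus_coact_type[simp]: "ar minus_coact" "dom minus_coact = H" "cod minus_coact = H \<boxtimes> H"
  unfolding minus_act_def minus_coact_def by simp_all

lemma T_D_T: "(\<iota> \<otimes> T) \<odot> D \<odot> T = minus_coact"
  unfolding minus_coact_def using D_T sym_nat_H_k(2)[of T, symmetric] by simp

lemma ll_hopf_module_minus: "ll_hopf_module C H m D H minus_act minus_coact"
proof -
  have m_tar_conj: "m \<otimes> (T \<odot> m \<odot> (\<iota> \<otimes> T)) = (\<iota> \<otimes> T) \<odot> (m \<otimes> m) \<odot> (\<iota> \<otimes> \<iota> \<otimes> \<iota> \<otimes> T)" by simp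
  have D_tar_conj: "D \<otimes> ((\<iota> \<otimes> T) \<odot> D \<odot> T) = (\<iota> \<otimes> \<iota> \<otimes> \<iota> \<otimes> T) \<odot> (D \<otimes> D) \<odot> (\<iota> \<otimes> T)" by simp
  have T_cancel: "ar k \<Longrightarrow> cod k = H \<boxtimes> H \<boxtimes> H \<boxtimes> H \<Longrightarrow>
     (\<iota> \<otimes> \<iota> \<otimes> \<iota> \<otimes> T) \<odot> (\<iota> \<otimes> \<sigma> \<otimes> \<iota>) \<odot> (\<iota> \<otimes> \<iota> \<otimes> \<iota> \<otimes> T) \<odot> k = (\<iota> \<otimes> \<sigma> \<otimes> \<iota>) \<odot> k" for k
    by simp
  have "((\<iota> \<otimes> T) \<odot> D \<odot> T) \<odot> (T \<odot> m \<odot> (\<iota> \<otimes> T)) =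
    (m \<otimes> (T \<odot> m \<odot> (\<iota> \<otimes> T))) \<odot> (\<iota> \<otimes> \<sigma> \<otimes> \<iota>) \<odot> (D \<otimes> ((\<iota> \<otimes> T) \<odot> D \<odot> T))"
    unfolding m_tar_conj D_tar_conj by (simp del: interchange_rules add: T_cancel D_m_k)
  then show ?thesis unfolding ll_hopf_module_def T_m_T T_D_T .
qed

lemma minus_act_commute: "minus_act \<odot> (\<iota> \<otimes> m) = m \<odot> (\<iota> \<otimes> minus_act) \<odot> (\<sigma> \<otimes> \<iota>)"
proof -
  have sym_nat_m: "\<sigma> \<odot> (\<iota> \<otimes> m) = (m \<otimes> \<iota>) \<odot> sym H (H \<boxtimes> H)" using sym_nat[of \<iota> m] by simp
  have "minus_act \<odot> (\<iota> \<otimes> m) = m \<odot> (\<iota> \<otimes> m) \<odot> (\<iota> \<otimes> \<iota> \<otimes> S) \<odot> sym H (H \<boxtimes> H)"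
    unfolding minus_act_def by (subst m_assoc_k[symmetric]) (simp_all add: sym_nat_m)
  also have "\<dots> = m \<odot> (\<iota> \<otimes> minus_act) \<odot> (\<sigma> \<otimes> \<iota>)"
    unfolding minus_act_def by (simp add: sym_tob_right)
  finally show ?thesis .
qed

lemma minus_coact_commute: "(\<iota> \<otimes> minus_coact) \<odot> D = (\<sigma> \<otimes> \<iota>) \<odot> (\<iota> \<otimes> D) \<odot> minus_coact"
proof -
  have D_sym: "(\<iota> \<otimes> D) \<odot> \<sigma> = (\<sigma> \<otimes> \<iota>) \<odot> (\<iota> \<otimes> \<sigma>) \<odot> (D \<otimes> \<iota>)"
    using sym_nat_D_left by (simp add: sym_tob_left)
  have "(\<sigma> \<otimes> \<iota>) \<odot> (\<iota> \<otimes> D) \<odot> minus_coact = (\<sigma> \<otimes> \<iota>) \<odot> (\<sigma> \<otimes> \<iota>) \<odot> (\<iota> \<otimes> \<sigma>) \<odot> (D \<otimes> \<iota>) \<odot> (\<iota> \<otimes> T) \<odot> D"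
    unfolding minus_coact_def using cmp_eq_extend[OF D_sym] by (simp del: interchange_rules)
  also have "\<dots> = (\<iota> \<otimes> \<sigma>) \<odot> (D \<otimes> T) \<odot> D"
    by simp
  also have "\<dots> = (\<iota> \<otimes> \<sigma>) \<odot> (\<iota> \<otimes> \<iota> \<otimes> T) \<odot> frozen ((D \<otimes> \<iota>) \<odot> D)"
    by (simp add: frozen_def del: D3_fold D3_fold_k)
  also have "\<dots> = (\<iota> \<otimes> (\<sigma> \<odot> (\<iota> \<otimes> T))) \<odot> D3"
    by (simp add: frozen_def)
  also have "\<dots> = (\<iota> \<otimes> minus_coact) \<odot> D"
    unfolding minus_coact_def by (simp add: D3_def D_coassoc del: D3_fold D3_fold_k)
  finally show ?thesis ..
qed

end

section \<open>Acting on one tensor factor\<close>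

locale edge = smc_object C H for C :: "('o, 'm) smcat" and H +
  fixes X Y :: 'o
  assumes ob_X[simp]: "ob X" and ob_Y[simp]: "ob Y"
begin

text \<open>\<open>on_factor A B \<phi>\<close> applies \<open>\<phi> : A \<otimes> H \<rightarrow> B \<otimes> H\<close> to \<open>A \<otimes> X \<otimes> H \<otimes> Y\<close>, moving the
  prefix past \<open>X\<close> and back with symmetries; for \<open>A = H, B = one\<close> this is an action and for
  \<open>A = one, B = H\<close> a coaction on the middle factor.\<close>

definition on_factor where
  "on_factor A B \<phi> = (sym X B \<otimes> \<iota> \<otimes> idm Y) \<odot> (idm X \<otimes> \<phi> \<otimes> idm Y) \<odot> (sym A X \<otimes> \<iota> \<otimes> idm Y)"

abbreviation "H_hom \<phi> A B \<equiv> ar \<phi> \<and> dom \<phi> = A \<boxtimes> H \<and> cod \<phi> = B \<boxtimes> H \<and> ob A \<and> ob B"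

lemma on_factor_type[simp]:
  "H_hom \<phi> A B \<Longrightarrow> ar (on_factor A B \<phi>)"
  "H_hom \<phi> A B \<Longrightarrow> dom (on_factor A B \<phi>) = A \<boxtimes> X \<boxtimes> H \<boxtimes> Y"
  "H_hom \<phi> A B \<Longrightarrow> cod (on_factor A B \<phi>) = B \<boxtimes> X \<boxtimes> H \<boxtimes> Y"
  unfolding on_factor_def by simp_all

lemma on_factor_cmp:
  "H_hom \<phi> A B \<Longrightarrow> H_hom \<psi> B B' \<Longrightarrow> on_factor B B' \<psi> \<odot> on_factor A B \<phi> = on_factor A B' (\<psi> \<odot> \<phi>)"
  unfolding on_factor_def by (simp add: sym_inv_k)

lemma on_factor_cmp_k: "H_hom \<phi> A B \<Longrightarrow> H_hom \<psi> B B' \<Longrightarrow> ar k \<Longrightarrow> cod k = A \<boxtimes> X \<boxtimes> H \<boxtimes> Y \<Longrightarrow>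
  on_factor B B' \<psi> \<odot> on_factor A B \<phi> \<odot> k = on_factor A B' (\<psi> \<odot> \<phi>) \<odot> k"
  by (simp flip: cmp_assoc add: on_factor_cmp)

lemma tar_idm_eq_on_factor:
  "ar \<theta> \<Longrightarrow> \<theta> \<otimes> idm X \<otimes> \<iota> \<otimes> idm Y = on_factor (dom \<theta>) (cod \<theta>) (\<theta> \<otimes> \<iota>)"
  unfolding on_factor_def by (simp add: sym_nat_idm_k sym_inv_k)

lemma tar_on_factor: "ar \<theta> \<Longrightarrow> H_hom \<phi> A B \<Longrightarrow>
  \<theta> \<otimes> on_factor A B \<phi> = on_factor (dom \<theta> \<boxtimes> A) (cod \<theta> \<boxtimes> B) (\<theta> \<otimes> \<phi>)"
proof -
  assume a: "ar \<theta>" "H_hom \<phi> A B"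
  define A' B' where "A' = dom \<theta>" and "B' = cod \<theta>"
  have "on_factor (A' \<boxtimes> A) (B' \<boxtimes> B) (\<theta> \<otimes> \<phi>) =
    (((idm B' \<otimes> sym X B) \<odot> (sym X B' \<otimes> idm B)) \<otimes> \<iota> \<otimes> idm Y) \<odot> (idm X \<otimes> \<theta> \<otimes> \<phi> \<otimes> idm Y) \<odot>
    (((sym A' X \<otimes> idm A) \<odot> (idm A' \<otimes> sym A X)) \<otimes> \<iota> \<otimes> idm Y)"
    unfolding on_factor_def A'_def B'_def using a by (simp add: sym_tob_right sym_tob_left del: idm_tob)
  also have "\<dots> = (idm B' \<otimes> sym X B \<otimes> \<iota> \<otimes> idm Y) \<odot> (sym X B' \<otimes> idm B \<otimes> \<iota> \<otimes> idm Y) \<odot>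
    (idm X \<otimes> \<theta> \<otimes> \<phi> \<otimes> idm Y) \<odot> (sym A' X \<otimes> idm A \<otimes> \<iota> \<otimes> idm Y) \<odot> (idm A' \<otimes> sym A X \<otimes> \<iota> \<otimes> idm Y)"
    unfolding A'_def B'_def using a
    by (simp add: tar_cmp_factor_left_k tar_cmp_factor_left del: interchange_rules)
  also have "\<dots> = \<theta> \<otimes> on_factor A B \<phi>"
    unfolding on_factor_def A'_def B'_def using a by (simp add: sym_nat_idm_k sym_inv_k)
  finally show ?thesis unfolding A'_def B'_def ..
qed

lemmas on_factor_rules = on_factor_cmp on_factor_cmp_k tar_idm_eq_on_factor tar_on_factor

lemma ll_hopf_module_on_factor:
  assumes "c_hom C \<mu> (H \<boxtimes> H) H" "c_hom C \<delta> H (H \<boxtimes> H)" "c_hom C f (H \<boxtimes> H) H" "c_hom C g H (H \<boxtimes> H)"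
    and "ll_hopf_module C H \<mu> \<delta> H f g"
  shows "ll_hopf_module C H \<mu> \<delta> (X \<boxtimes> H \<boxtimes> Y) (on_factor H one f) (on_factor one H g)"
  using assms unfolding c_hom_def ll_hopf_module_def by (simp add: on_factor_rules)

lemma on_factor_actions_commute:
  assumes "c_hom C f1 (H \<boxtimes> H) H" "c_hom C f2 (H \<boxtimes> H) H"
    and "f2 \<odot> (\<iota> \<otimes> f1) = f1 \<odot> (\<iota> \<otimes> f2) \<odot> (\<sigma> \<otimes> \<iota>)"
  shows "on_factor H one f2 \<odot> (\<iota> \<otimes> on_factor H one f1) =
    on_factor H one f1 \<odot> (\<iota> \<otimes> on_factor H one f2) \<odot> (\<sigma> \<otimes> idm (X \<boxtimes> H \<boxtimes> Y))"
  using assms unfolding c_hom_def by (simp add: on_factor_rules)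

lemma on_factor_coactions_commute:
  assumes "c_hom C g1 H (H \<boxtimes> H)" "c_hom C g2 H (H \<boxtimes> H)"
    and "(\<iota> \<otimes> g2) \<odot> g1 = (\<sigma> \<otimes> \<iota>) \<odot> (\<iota> \<otimes> g1) \<odot> g2"
  shows "(\<iota> \<otimes> on_factor one H g2) \<odot> on_factor one H g1 =
    (\<sigma> \<otimes> idm (X \<boxtimes> H \<boxtimes> Y)) \<odot> (\<iota> \<otimes> on_factor one H g1) \<odot> on_factor one H g2"
  using assms unfolding c_hom_def by (simp add: on_factor_rules)

lemma edge_act_eq_on_factor: "c_hom C f (H \<boxtimes> H) H \<Longrightarrow>
   (idm X \<otimes> f \<otimes> idm Y) \<odot> (sym H X \<otimes> idm (H \<boxtimes> Y)) = on_factor H one f"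
  unfolding on_factor_def c_hom_def by (simp add: sym_one_right)

lemma edge_coact_eq_on_factor: "c_hom C g H (H \<boxtimes> H) \<Longrightarrow>
   (sym X H \<otimes> idm (H \<boxtimes> Y)) \<odot> (idm X \<otimes> g \<otimes> idm Y) = on_factor one H g"
  unfolding on_factor_def c_hom_def by (simp add: sym_one_left)

end

section \<open>Tensor powers indexed by edges\<close>

lemma epos_less: "a \<in> set es \<Longrightarrow> epos es a < length es"
  unfolding epos_def by (induct es) auto

context smc_object
begin

lemma ob_tpow[simp]: "ob (tpow C H n)"
  by (induct n) simp_all

lemma tpow_add: "tpow C H a \<boxtimes> tpow C H b = tpow C H (a + b)"
  by (induct a) simp_all

lemma tpowE_split: "a \<in> set es \<Longrightarrow> tpowE C H es = befE C H es a \<boxtimes> H \<boxtimes> aftE C H es a"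
proof -
  assume a: "a \<in> set es"
  define k n where "k = epos es a" and "n = length es - epos es a - 1"
  have "length es = k + Suc n" using epos_less[OF a] unfolding k_def n_def by simp
  then have "tpowE C H es = tpow C H k \<boxtimes> tpow C H (Suc n)"
    unfolding tpowE_def by (simp only: tpow_add)
  then show ?thesis unfolding befE_def aftE_def k_def n_def by (simp only: tpow.simps)
qed

end

theorem lemma5p2:
  fixes C :: "('o, 'm) smcat" and H :: 'o and m u D e S p :: 'm
    and es :: "'e list" and \<alpha> :: 'e
  assumes "strict_smc C"
    and "pivotal_hopf C H m u D e S p"
    and "distinct es" and "\<alpha> \<in> set es"
  shows "ll_hopf_module C H m D (tpowE C H es) (act_plus C H m es \<alpha>) (coact_plus C H D es \<alpha>)
       \<and> ll_hopf_module C H m D (tpowE C H es) (act_minus C H m S p es \<alpha>) (coact_minus C H m D S p es \<alpha>)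
       \<and> c_cmp C (act_minus C H m S p es \<alpha>) (c_tar C (c_id C H) (act_plus C H m es \<alpha>)) =
         c_cmp C (act_plus C H m es \<alpha>)
           (c_cmp C (c_tar C (c_id C H) (act_minus C H m S p es \<alpha>))
                    (c_tar C (c_sym C H H) (c_id C (tpowE C H es))))
       \<and> c_cmp C (c_tar C (c_id C H) (coact_minus C H m D S p es \<alpha>)) (coact_plus C H D es \<alpha>) =
         c_cmp C (c_tar C (c_sym C H H) (c_id C (tpowE C H es)))
           (c_cmp C (c_tar C (c_id C H) (coact_plus C H D es \<alpha>)) (coact_minus C H m D S p es \<alpha>))"
proof -
  interpret piv C H m u D e S p
    using assms(1,2) unfolding piv_def piv_axioms_def hopf_def hopf_axioms_def smc_object_def
      smc_object_axioms_def smc_def pivotal_hopf_def hopf_monoid_def c_hom_def by simp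
  interpret edge C H "befE C H es \<alpha>" "aftE C H es \<alpha>"
    by unfold_locales (simp_all add: befE_def aftE_def)
  have M: "tpowE C H es = befE C H es \<alpha> \<boxtimes> H \<boxtimes> aftE C H es \<alpha>"
    using assms(4) by (rule tpowE_split)
  have T: "pivT C m S p = T" unfolding pivT_def T_def ..
  have act: "act_plus C H m es \<alpha> = on_factor H one m"
    "act_minus C H m S p es \<alpha> = on_factor H one minus_act"
    unfolding act_plus_def act_minus_def edge_act_def Let_def T T_m_T
    by (rule edge_act_eq_on_factor; simp add: c_hom_def)+
  have coact: "coact_plus C H D es \<alpha> = on_factor one H D"
    "coact_minus C H m D S p es \<alpha> = on_factor one H minus_coact"
    unfolding coact_plus_def coact_minus_def edge_coact_def Let_def T T_D_T
    by (rule edge_coact_eq_on_factor; simp add: c_hom_def)+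
  show ?thesis
    unfolding M act coact
    by (intro conjI ll_hopf_module_on_factor on_factor_actions_commute on_factor_coactions_commute)
      (simp_all add: c_hom_def ll_hopf_module_regular ll_hopf_module_minus
        minus_act_commute minus_coact_commute)
qed

end
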